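(* Let $w,k$ be positive integers and let $x$ be an integer with $2\le x\le p^k-1$. Let $N$ be the least period of the sequence $(T_n^i(x)\bmod p^w)_{i\ge0}$ and let $M=\max\{t\ge 0 : T_n^N(x)\equiv x\pmod{p^t}\}$. If $k>M$, then the least period of the sequence $(T_n^i(x)\bmod p^k)_{i\ge 0}$ is larger than $N$.
   Context: $p$ is a prime with $p>3$ and $n>1$ is an integer with $\gcd(n,p)=\gcd(n,p^2-1)=1$ (so $T_n$ induces a permutation of $\mathbb{Z}_{p^j}$ for every $j\ge1$). $T_n(x)\in\mathbb{Z}[x]$ is the Chebyshev polynomial of the first kind: $T_0=1$, $T_1=x$, $T_d=2xT_{d-1}-T_{d-2}$. $T_n^i$ is the $i$-fold composition of $T_n$ with itself ($T_n^0(x)=x$), evaluated over $\mathbb{Z}$; it equals $T_{n^i}$. The least period of $(T_n^i(x)\bmod p^j)_{i\ge0}$ is the least positive integer $N$ with $T_n^N(x)\equiv x\pmod{p^j}$. *)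

theory Defs
  imports "HOL-Computational_Algebra.Primes" "HOL-Number_Theory.Cong"
begin

fun cheb :: "nat \<Rightarrow> int \<Rightarrow> int" where
  "cheb 0 x = 1"
| "cheb (Suc 0) x = x"
| "cheb (Suc (Suc d)) x = 2 * x * cheb (Suc d) x - cheb d x"

definition least_period :: "nat \<Rightarrow> int \<Rightarrow> int \<Rightarrow> nat" where
  "least_period n m x = (LEAST N. N > 0 \<and> [(cheb n ^^ N) x = x] (mod m))"

end

theory Submission
  imports Defs "HOL-Computational_Algebra.Polynomial" "HOL-Number_Theory.Residues"
begin

text \<open>
  Once x is known to be periodic under T_n modulo every power of p, the theorem is order
  theory: w \<le> M < k, so the least period L modulo p^k is also a period modulo p^w and
  N \<le> L; and L \<noteq> N because N is not a period modulo p^k.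

  Periodicity comes from computing in Z[t] modulo (p^j, t^2 - 2xt + 1). There t and
  t' = 2x - t satisfy t t' = 1 and t^m + t'^m = 2 T_m(x). By Frobenius t^p is again a root of
  t^2 - 2xt + 1 modulo p, which forces (t^(p-1) - 1)(t^(p+1) - 1) = 0 and hence
  t^((p^2-1)p) = 1 modulo p; lifting gives t^((p^2-1)p^j) = 1 modulo p^j. So T_m(x) mod p^j
  depends only on m modulo E = (p^2-1)p^j, and as n is coprime to E, Euler's theorem gives
  T_n^N(x) = T_(n^N)(x) = T_1(x) = x modulo p^j for N = \<phi>(E).
\<close>

section \<open>Congruence modulo an ideal with two generators\<close>

definition cong_mod2 :: "'a::comm_ring_1 \<Rightarrow> 'a \<Rightarrow> 'a \<Rightarrow> 'a \<Rightarrow> bool" where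
  "cong_mod2 u v a b \<longleftrightarrow> (\<exists>r s. a - b = u * r + v * s)"

lemma cong_mod2_iff_diff: "cong_mod2 u v a b \<longleftrightarrow> cong_mod2 u v (a - b) 0"
  by (simp add: cong_mod2_def)

lemma cong_mod2_refl [simp]: "cong_mod2 u v a a"
  unfolding cong_mod2_def by (rule exI[of _ 0], rule exI[of _ 0]) simp

lemma cong_mod2_generators [simp]: "cong_mod2 u v u 0" "cong_mod2 u v v 0"
  unfolding cong_mod2_def
  by (rule exI[of _ 1], rule exI[of _ 0], simp) (rule exI[of _ 0], rule exI[of _ 1], simp)

lemma cong_mod2_sym: "cong_mod2 u v a b \<Longrightarrow> cong_mod2 u v b a"
  unfolding cong_mod2_def
proof (elim exE)
  fix r s assume "a - b = u * r + v * s"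
  then have "b - a = u * (- r) + v * (- s)" by (simp add: algebra_simps)
  then show "\<exists>r s. b - a = u * r + v * s" by blast
qed

lemma cong_mod2_trans: "cong_mod2 u v a b \<Longrightarrow> cong_mod2 u v b c \<Longrightarrow> cong_mod2 u v a c"
  unfolding cong_mod2_def
proof (elim exE)
  fix r s r' s' assume "a - b = u * r + v * s" "b - c = u * r' + v * s'"
  then have "a - c = u * (r + r') + v * (s + s')" by (simp add: algebra_simps)
  then show "\<exists>r s. a - c = u * r + v * s" by blast
qed

lemma cong_mod2_add:
  "cong_mod2 u v a b \<Longrightarrow> cong_mod2 u v a' b' \<Longrightarrow> cong_mod2 u v (a + a') (b + b')"
  unfolding cong_mod2_def
proof (elim exE)
  fix r s r' s' assume "a - b = u * r + v * s" "a' - b' = u * r' + v * s'"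
  then have "(a + a') - (b + b') = u * (r + r') + v * (s + s')" by (simp add: algebra_simps)
  then show "\<exists>r s. (a + a') - (b + b') = u * r + v * s" by blast
qed

lemma cong_mod2_mult_left: "cong_mod2 u v a b \<Longrightarrow> cong_mod2 u v (c * a) (c * b)"
  unfolding cong_mod2_def
proof (elim exE)
  fix r s assume "a - b = u * r + v * s"
  then have "c * a - c * b = u * (c * r) + v * (c * s)" by (simp add: algebra_simps)
  then show "\<exists>r s. c * a - c * b = u * r + v * s" by blast
qed

lemma cong_mod2_diff:
  "cong_mod2 u v a b \<Longrightarrow> cong_mod2 u v a' b' \<Longrightarrow> cong_mod2 u v (a - a') (b - b')"
  using cong_mod2_add[of u v a b "-a'" "-b'"] cong_mod2_mult_left[of u v a' b' "-1"] by simp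

lemma cong_mod2_mult:
  "cong_mod2 u v a b \<Longrightarrow> cong_mod2 u v a' b' \<Longrightarrow> cong_mod2 u v (a * a') (b * b')"
  by (metis cong_mod2_mult_left cong_mod2_trans mult.commute)

lemma cong_mod2_power: "cong_mod2 u v a b \<Longrightarrow> cong_mod2 u v (a ^ m) (b ^ m)"
  by (induction m) (auto intro: cong_mod2_mult)

lemma cong_mod2_zero_dvd: "cong_mod2 u v a 0 \<Longrightarrow> a dvd b \<Longrightarrow> cong_mod2 u v b 0"
  by (elim dvdE) (use cong_mod2_mult_left[of u v a 0] in \<open>simp add: mult.commute\<close>)

lemma cong_mod2_dvd_generator: "u' dvd u \<Longrightarrow> cong_mod2 u v a b \<Longrightarrow> cong_mod2 u' v a b"
  unfolding cong_mod2_def by (metis dvdE mult.assoc)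

lemma cong_mod2_mult_zero:
  assumes "cong_mod2 u v a 0" and "cong_mod2 u' v b 0"
  shows "cong_mod2 (u * u') v (a * b) 0"
proof -
  obtain r s r' s' where "a = u * r + v * s" "b = u' * r' + v * s'"
    using assms unfolding cong_mod2_def by auto
  then have "a * b - 0 = (u * u') * (r * r') + v * (s * b + u * r * s')"
    by (simp add: algebra_simps)
  then show ?thesis unfolding cong_mod2_def by blast
qed

lemma cong_mod2_of_int:
  "[c = d] (mod m) \<Longrightarrow> cong_mod2 (of_int m) v (of_int c) (of_int d)"
proof -
  assume "[c = d] (mod m)"
  then obtain k where "c - d = m * k" by (metis cong_iff_dvd_diff dvdE)
  then have "of_int c - of_int d = of_int m * of_int k + v * 0" by (simp flip: of_int_diff of_int_mult)
  then show ?thesis unfolding cong_mod2_def by blast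
qed

lemma cong_mod2_power_cong_exponent:
  assumes "cong_mod2 u v (a ^ e) 1" and "[m = m'] (mod e)"
  shows "cong_mod2 u v (a ^ m) (a ^ m')"
proof -
  have reduce: "cong_mod2 u v (a ^ k) (a ^ (k mod e))" for k
  proof -
    have "a ^ k = a ^ (e * (k div e) + k mod e)"
      by (simp only: mult_div_mod_eq)
    also have "\<dots> = (a ^ e) ^ (k div e) * a ^ (k mod e)"
      by (simp only: power_add power_mult)
    finally have "a ^ k = (a ^ e) ^ (k div e) * a ^ (k mod e)" .
    moreover have "cong_mod2 u v ((a ^ e) ^ (k div e) * a ^ (k mod e)) (1 ^ (k div e) * a ^ (k mod e))"
      by (intro cong_mod2_mult cong_mod2_power assms(1) cong_mod2_refl)
    ultimately show ?thesis by simp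
  qed
  have "m mod e = m' mod e"
    using assms(2) unfolding cong_def .
  then have "cong_mod2 u v (a ^ (m mod e)) (a ^ m')"
    using cong_mod2_sym[OF reduce[of m']] by simp
  then show ?thesis
    using cong_mod2_trans[OF reduce[of m]] by blast
qed

lemma cong_mod2_one_plus_power:
  assumes "cong_mod2 u v (d ^ 2) 0"
  shows "cong_mod2 u v ((1 + d) ^ q) (1 + of_nat q * d)"
proof (induction q)
  case (Suc q)
  have "cong_mod2 u v ((1 + d) ^ q * (1 + d)) ((1 + of_nat q * d) * (1 + d))"
    by (intro cong_mod2_mult Suc.IH cong_mod2_refl)
  moreover have "cong_mod2 u v ((1 + of_nat q * d) * (1 + d)) (1 + of_nat (Suc q) * d + of_nat q * 0)"
  proof -
    have "(1 + of_nat q * d) * (1 + d) = 1 + of_nat (Suc q) * d + of_nat q * d ^ 2"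
      by (simp add: algebra_simps power2_eq_square)
    then show ?thesis by (metis cong_mod2_add cong_mod2_mult_left cong_mod2_refl assms)
  qed
  ultimately show ?case by (auto intro: cong_mod2_trans simp: mult.commute)
qed simp

lemma cong_mod2_power_lift:
  assumes "cong_mod2 u v a 1" and "c dvd u * u" and "c dvd of_nat q * u"
  shows "cong_mod2 c v (a ^ q) 1"
proof -
  define d where "d = a - 1"
  have d: "cong_mod2 u v d 0" using assms(1) cong_mod2_iff_diff unfolding d_def by blast
  have "cong_mod2 (u * u) v (d ^ 2) 0"
    using cong_mod2_mult_zero[OF d d] by (simp add: power2_eq_square)
  then have "cong_mod2 c v ((1 + d) ^ q) (1 + of_nat q * d)"
    by (intro cong_mod2_one_plus_power cong_mod2_dvd_generator[OF assms(2)])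
  moreover have "cong_mod2 c v (of_nat q * d) 0"
    using cong_mod2_mult_zero[OF _ d, of "of_nat q"] assms(3)
    by (simp add: cong_mod2_dvd_generator)
  then have "cong_mod2 c v (1 + of_nat q * d) 1"
    using cong_mod2_add[OF cong_mod2_refl, of c v _ _ 1] by fastforce
  ultimately show ?thesis
    unfolding d_def using cong_mod2_trans by fastforce
qed

section \<open>Frobenius modulo a prime\<close>

lemma add_power_prime_eq:
  fixes a b :: "'a::comm_semiring_1"
  assumes "prime p"
  shows "\<exists>c. (a + b) ^ p = a ^ p + b ^ p + of_nat p * c"
proof -
  define g where "g k = of_nat (p choose k) * a ^ k * b ^ (p - k)" for k
  have "(a + b) ^ p = (\<Sum>k\<le>p. g k)"
    unfolding g_def by (rule binomial_ring)
  also have "\<dots> = g 0 + g p + (\<Sum>k\<in>{1..<p}. g k)"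
  proof -
    have "{..p} = insert 0 (insert p {1..<p})" using prime_gt_0_nat[OF assms] by auto
    then show ?thesis using prime_gt_0_nat[OF assms] by (simp add: add.assoc)
  qed
  also have "(\<Sum>k\<in>{1..<p}. g k)
      = of_nat p * (\<Sum>k\<in>{1..<p}. of_nat ((p choose k) div p) * a ^ k * b ^ (p - k))"
    unfolding sum_distrib_left
  proof (rule sum.cong)
    fix k assume "k \<in> {1..<p}"
    then have "p dvd (p choose k)" using dvd_choose_prime[of k p] assms by auto
    then have "of_nat (p choose k) = (of_nat p * of_nat ((p choose k) div p) :: 'a)"
      by (metis dvd_mult_div_cancel of_nat_mult)
    then show "g k = of_nat p * (of_nat ((p choose k) div p) * a ^ k * b ^ (p - k))"
      unfolding g_def by (simp add: mult.assoc)
  qed simp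
  also have "g 0 + g p = b ^ p + a ^ p"
    unfolding g_def by simp
  finally show ?thesis by (metis add.commute)
qed

lemma cong_mod2_add_power_prime:
  "prime p \<Longrightarrow> cong_mod2 (of_nat p) v ((a + b) ^ p) (a ^ p + b ^ p)"
proof -
  assume "prime p"
  then obtain c where "(a + b) ^ p = a ^ p + b ^ p + of_nat p * c"
    using add_power_prime_eq by blast
  then have "(a + b) ^ p - (a ^ p + b ^ p) = of_nat p * c + v * 0"
    by simp
  then show ?thesis unfolding cong_mod2_def by blast
qed

lemma power_prime_cong_self:
  fixes c :: int
  assumes "prime p"
  shows "[c ^ p = c] (mod int p)"
proof -
  define r where "r = nat (c mod int p)"
  have c_r: "[c = int r] (mod int p)"
    using prime_gt_0_nat[OF assms] by (simp add: r_def cong_def)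
  have "[r ^ p = r] (mod p)"
  proof (cases "p dvd r")
    case True
    then have "[r = 0] (mod p)" by (simp add: cong_0_iff)
    then have "[r ^ p = 0 ^ p] (mod p)" by (rule cong_pow)
    then have "[r ^ p = 0] (mod p)" using prime_gt_0_nat[OF assms] by (simp add: power_0_left)
    then show ?thesis using cong_trans cong_sym \<open>[r = 0] (mod p)\<close> by blast
  next
    case False
    then have "[r ^ (p - 1) * r = 1 * r] (mod p)"
      using fermat_theorem[OF assms] cong_scalar_right by blast
    then show ?thesis using prime_gt_0_nat[OF assms] by (simp flip: power_Suc2)
  qed
  then have "[int r ^ p = int r] (mod int p)"
    by (simp flip: cong_int_iff)
  then show ?thesis
    using cong_trans[OF cong_trans[OF cong_pow[OF c_r]] cong_sym[OF c_r]] by blast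
qed

lemma cong_mod2_frobenius_quadratic:
  assumes "prime p"
  shows "cong_mod2 (of_nat p) v ((a ^ 2 + of_int c * a + 1) ^ p) ((a ^ p) ^ 2 + of_int c * a ^ p + 1)"
proof -
  have "cong_mod2 (of_nat p) v ((a ^ 2 + of_int c * a + 1) ^ p) ((a ^ 2 + of_int c * a) ^ p + 1 ^ p)"
    by (rule cong_mod2_add_power_prime[OF assms])
  moreover have "cong_mod2 (of_nat p) v ((a ^ 2 + of_int c * a) ^ p + 1 ^ p)
      ((a ^ 2) ^ p + (of_int c * a) ^ p + 1)"
    by (simp add: cong_mod2_add cong_mod2_add_power_prime[OF assms])
  moreover have "cong_mod2 (of_nat p) v ((a ^ 2) ^ p + (of_int c * a) ^ p + 1)
      ((a ^ p) ^ 2 + of_int c * a ^ p + 1)"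
  proof -
    have "cong_mod2 (of_int (int p)) v (of_int (c ^ p)) (of_int c)"
      by (rule cong_mod2_of_int[OF power_prime_cong_self[OF assms]])
    then have "cong_mod2 (of_nat p) v (of_int (c ^ p) * a ^ p) (of_int c * a ^ p)"
      using cong_mod2_mult[OF _ cong_mod2_refl] by simp
    moreover have "(a ^ 2) ^ p = (a ^ p) ^ 2"
      by (simp flip: power_mult add: mult.commute)
    ultimately show ?thesis
      by (simp add: cong_mod2_add power_mult_distrib)
  qed
  ultimately show ?thesis
    using cong_mod2_trans by blast
qed

lemma cong_mod2_power_minus_one_factors:
  assumes ab: "cong_mod2 u v (a * b) 1"
    and root: "cong_mod2 u v ((a ^ p) ^ 2 - (a + b) * a ^ p + 1) 0" and "p > 0"
  shows "cong_mod2 u v ((a ^ (p - 1) - 1) * (a ^ (p + 1) - 1)) 0"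
proof -
  define s where "s = a ^ p"
  have "cong_mod2 u v ((s - a) * (s - b)) 0"
  proof -
    have "(s - a) * (s - b) = s ^ 2 - (a + b) * s + a * b"
      by (simp add: algebra_simps power2_eq_square)
    moreover have "cong_mod2 u v (s ^ 2 - (a + b) * s + a * b) (s ^ 2 - (a + b) * s + 1)"
      by (intro cong_mod2_add cong_mod2_refl ab)
    ultimately show ?thesis
      using root cong_mod2_trans unfolding s_def by simp
  qed
  then have "cong_mod2 u v ((a * b) * ((s - a) * (s - b))) 0"
    using cong_mod2_mult_left by fastforce
  moreover have "(a * b) * ((s - a) * (s - b)) = (a * b) * (a ^ (p - 1) - 1) * (a ^ (p + 1) - a * b)"
    using \<open>p > 0\<close> by (cases p) (simp_all add: s_def algebra_simps)
  moreover have "cong_mod2 u v ((a * b) * (a ^ (p - 1) - 1) * (a ^ (p + 1) - a * b))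
      (1 * (a ^ (p - 1) - 1) * (a ^ (p + 1) - 1))"
    by (intro cong_mod2_mult cong_mod2_diff cong_mod2_refl ab)
  ultimately show ?thesis
    using cong_mod2_sym cong_mod2_trans by fastforce
qed

lemma cong_mod2_power_prime_square_minus_one:
  assumes p: "cong_mod2 u v (of_nat p) 0"
    and factors: "cong_mod2 u v ((a ^ (p - 1) - 1) * (a ^ (p + 1) - 1)) 0"
  shows "cong_mod2 u v (a ^ ((p ^ 2 - 1) * p)) 1"
proof -
  define d where "d = a ^ ((p - 1) * (p + 1)) - 1"
  have "(a ^ (p - 1) - 1) dvd d" "(a ^ (p + 1) - 1) dvd d"
    unfolding d_def power_mult
    by (metis dvdI power_diff_1_eq, metis dvdI mult.commute power_diff_1_eq power_mult)
  then have "(a ^ (p - 1) - 1) * (a ^ (p + 1) - 1) dvd d ^ 2"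
    by (simp add: power2_eq_square mult_dvd_mono)
  then have "cong_mod2 u v (d ^ 2) 0"
    using cong_mod2_zero_dvd[OF factors] by blast
  then have "cong_mod2 u v ((1 + d) ^ p) (1 + of_nat p * d)"
    by (rule cong_mod2_one_plus_power)
  moreover have "cong_mod2 u v (1 + of_nat p * d) (1 + 0 * d)"
    by (intro cong_mod2_add cong_mod2_mult p cong_mod2_refl)
  moreover have "1 + d = a ^ ((p ^ 2 - 1))"
    by (simp add: d_def algebra_simps power2_eq_square)
  ultimately show ?thesis
    using cong_mod2_trans by (fastforce simp: power_mult)
qed

section \<open>Chebyshev values as power sums of the roots\<close>

lemma cong_mod2_monic_of_int:
  fixes f :: "int poly"
  assumes monic: "lead_coeff f = 1" and deg: "degree f > 0"
    and cong: "cong_mod2 (of_int M) f (of_int c) (of_int d)"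
  shows "[c = d] (mod M)"
proof -
  obtain A B where AB: "of_int (c - d) = of_int M * A + f * B"
    using cong unfolding cong_mod2_def by auto
  \<comment> \<open>Reduce B coefficientwise modulo M (for M = 0 this does nothing). Since f is monic, a
    nonzero remainder R would give f * R a leading coefficient in positive degree that M does
    not divide.\<close>
  define R where "R = map_poly (\<lambda>a. a mod M) B"
  define Q where "Q = map_poly (\<lambda>a. a div M) B"
  have "B = of_int M * Q + R"
    by (rule poly_eqI) (simp add: R_def Q_def coeff_map_poly of_int_poly)
  then have fR: "f * R = of_int (c - d) - of_int M * (A + f * Q)"
    using AB by (simp add: algebra_simps)
  have "R = 0"
  proof (rule ccontr)
    assume "R \<noteq> 0"
    define e where "e = degree (f * R)"
    have "f \<noteq> 0" using monic by auto
    then have "e > 0" using deg \<open>R \<noteq> 0\<close> by (simp add: e_def degree_mult_eq)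
    then have "M dvd Polynomial.coeff (f * R) e"
      by (simp add: fR of_int_poly coeff_pCons split: nat.split)
    moreover have "Polynomial.coeff (f * R) e = Polynomial.coeff B (degree R) mod M"
      using monic by (simp add: e_def lead_coeff_mult R_def coeff_map_poly)
    moreover have "Polynomial.coeff B (degree R) mod M \<noteq> 0"
    proof -
      have "Polynomial.coeff R (degree R) \<noteq> 0" using \<open>R \<noteq> 0\<close> by simp
      then show ?thesis by (simp add: R_def coeff_map_poly)
    qed
    ultimately show False by (metis dvd_imp_mod_0 mod_mod_trivial)
  qed
  then have "c - d = M * Polynomial.coeff (A + f * Q) 0"
    using arg_cong[OF fR, of "\<lambda>P. Polynomial.coeff P 0"] by (simp add: of_int_poly)
  then show ?thesis by (simp add: cong_iff_dvd_diff)
qed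

lemma cong_mod2_power_sum_cheb:
  assumes sum: "cong_mod2 u v (a + b) (of_int (2 * y))" and prod: "cong_mod2 u v (a * b) 1"
  shows "cong_mod2 u v (a ^ m + b ^ m) (of_int (2 * cheb m y))"
proof (induction m rule: induct_nat_012)
  case (ge2 m)
  have "a ^ Suc (Suc m) + b ^ Suc (Suc m)
      = (a + b) * (a ^ Suc m + b ^ Suc m) - (a * b) * (a ^ m + b ^ m)"
    by (simp add: algebra_simps)
  moreover have "cong_mod2 u v ((a + b) * (a ^ Suc m + b ^ Suc m) - (a * b) * (a ^ m + b ^ m))
      (of_int (2 * y) * of_int (2 * cheb (Suc m) y) - 1 * of_int (2 * cheb m y))"
    by (intro cong_mod2_diff cong_mod2_mult sum prod ge2)
  ultimately show ?case by (simp add: algebra_simps)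
qed (use sum in simp_all)

definition cheb_charpoly :: "int \<Rightarrow> int poly" where
  "cheb_charpoly x = [:1, -2 * x, 1:]"

abbreviation cheb_cong :: "int \<Rightarrow> int \<Rightarrow> int poly \<Rightarrow> int poly \<Rightarrow> bool" where
  "cheb_cong M x \<equiv> cong_mod2 (of_int M) (cheb_charpoly x)"

lemma cheb_cong_of_int_iff: "cheb_cong M x (of_int c) (of_int d) \<longleftrightarrow> [c = d] (mod M)"
  using cong_mod2_monic_of_int[of "cheb_charpoly x"] cong_mod2_of_int
  by (auto simp: cheb_charpoly_def)

lemma cheb_roots_sum: "[:0, 1:] + [:2 * x, -1:] = (of_int (2 * x) :: int poly)"
  by (simp add: of_int_poly)

lemma cheb_roots_prod: "cheb_cong M x ([:0, 1:] * [:2 * x, -1:]) 1"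
proof -
  have "[:0, 1:] * [:2 * x, -1:] - 1 = of_int M * 0 + cheb_charpoly x * (-1)"
    by (simp add: cheb_charpoly_def one_pCons)
  then show ?thesis unfolding cong_mod2_def by blast
qed

lemma cheb_cong_power_sum:
  "cheb_cong M x ([:0, 1:] ^ m + [:2 * x, -1:] ^ m) (of_int (2 * cheb m x))"
  by (rule cong_mod2_power_sum_cheb[OF _ cheb_roots_prod]) (simp only: cheb_roots_sum cong_mod2_refl)

lemma cheb_mult: "cheb a (cheb b x) = cheb (a * b) x"
proof -
  \<comment> \<open>t^b and t'^b have sum 2 T_b(x) and product 1, so their a-th power sum is 2 T_a(T_b(x)).\<close>
  let ?t = "[:0, 1:] :: int poly" and ?t' = "[:2 * x, -1:]"
  have "cheb_cong 0 x ((?t ^ b) ^ a + (?t' ^ b) ^ a) (of_int (2 * cheb a (cheb b x)))"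
  proof (rule cong_mod2_power_sum_cheb)
    show "cheb_cong 0 x (?t ^ b + ?t' ^ b) (of_int (2 * cheb b x))"
      by (rule cheb_cong_power_sum)
    show "cheb_cong 0 x (?t ^ b * ?t' ^ b) 1"
      using cong_mod2_power[OF cheb_roots_prod, of 0 x b] by (simp only: power_mult_distrib power_one)
  qed
  moreover have "(?t ^ b) ^ a + (?t' ^ b) ^ a = ?t ^ (a * b) + ?t' ^ (a * b)"
    by (simp flip: power_mult add: mult.commute)
  ultimately have "cheb_cong 0 x (of_int (2 * cheb a (cheb b x))) (?t ^ (a * b) + ?t' ^ (a * b))"
    using cong_mod2_sym by simp
  then have "cheb_cong 0 x (of_int (2 * cheb a (cheb b x))) (of_int (2 * cheb (a * b) x))"
    using cheb_cong_power_sum cong_mod2_trans by blast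
  then show ?thesis by (simp only: cheb_cong_of_int_iff cong_0)
qed

lemma funpow_cheb: "(cheb n ^^ i) x = cheb (n ^ i) x"
  by (induction i) (simp_all add: cheb_mult mult.commute)

section \<open>Periodicity modulo prime powers\<close>

lemma cheb_root_power_cong_one_mod_prime:
  assumes "prime p"
  shows "cheb_cong (int p) x ([:0, 1:] ^ ((p ^ 2 - 1) * p)) 1"
proof (rule cong_mod2_power_prime_square_minus_one)
  let ?t = "[:0, 1:] :: int poly" and ?t' = "[:2 * x, -1:]"
  show "cheb_cong (int p) x (of_nat p) 0"
    using cong_mod2_generators(1)[of "of_int (int p)"] by simp
  have "cheb_cong (int p) x (cheb_charpoly x ^ p) 0"
    using cong_mod2_power[OF cong_mod2_generators(2), of _ _ p] prime_gt_0_nat[OF assms]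
    by (simp add: power_0_left)
  moreover have "cheb_charpoly x = ?t ^ 2 + of_int (- 2 * x) * ?t + 1"
    by (simp add: cheb_charpoly_def of_int_poly power2_eq_square one_pCons)
  ultimately have "cheb_cong (int p) x ((?t ^ p) ^ 2 + of_int (- 2 * x) * ?t ^ p + 1) 0"
    using cong_mod2_frobenius_quadratic[OF assms, of "cheb_charpoly x" ?t "- 2 * x"]
      cong_mod2_sym cong_mod2_trans by fastforce
  moreover have "(?t ^ p) ^ 2 + of_int (- 2 * x) * ?t ^ p + 1 = (?t ^ p) ^ 2 - (?t + ?t') * ?t ^ p + 1"
    by (simp only: cheb_roots_sum) simp
  ultimately have "cheb_cong (int p) x ((?t ^ p) ^ 2 - (?t + ?t') * ?t ^ p + 1) 0"
    by (simp only:)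
  then show "cheb_cong (int p) x ((?t ^ (p - 1) - 1) * (?t ^ (p + 1) - 1)) 0"
    by (rule cong_mod2_power_minus_one_factors[OF cheb_roots_prod _ prime_gt_0_nat[OF assms]])
qed

lemma cheb_root_power_cong_one:
  assumes "prime p"
  shows "cheb_cong (int p ^ Suc j) x ([:0, 1:] ^ ((p ^ 2 - 1) * p ^ Suc j)) 1"
proof (induction j)
  case 0
  show ?case using cheb_root_power_cong_one_mod_prime[OF assms] by simp
next
  case (Suc j)
  have "cheb_cong (int p ^ Suc (Suc j)) x (([:0, 1:] ^ ((p ^ 2 - 1) * p ^ Suc j)) ^ p) 1"
  proof (rule cong_mod2_power_lift[OF Suc.IH])
    have "of_int (int p ^ Suc j) * of_int (int p ^ Suc j)
        = of_int (int p ^ Suc (Suc j)) * (of_int (int p ^ j) :: int poly)"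
      by (simp flip: power_add)
    then show "of_int (int p ^ Suc (Suc j))
        dvd (of_int (int p ^ Suc j) * of_int (int p ^ Suc j) :: int poly)"
      by (metis dvdI)
    show "of_int (int p ^ Suc (Suc j)) dvd (of_nat p * of_int (int p ^ Suc j) :: int poly)"
      by simp
  qed
  then show ?case
    by (simp flip: power_mult add: ac_simps)
qed

lemma cheb_cong_index:
  assumes "prime p" and "odd p" and "[a = b] (mod (p ^ 2 - 1) * p ^ j)"
  shows "[cheb a x = cheb b x] (mod int p ^ j)"
proof (cases j)
  case (Suc i)
  let ?t = "[:0, 1:] :: int poly" and ?t' = "[:2 * x, -1:]" and ?E = "(p ^ 2 - 1) * p ^ j"
  have t: "cheb_cong (int p ^ j) x (?t ^ ?E) 1"
    using cheb_root_power_cong_one[OF assms(1)] Suc by blast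
  have "cheb_cong (int p ^ j) x (?t' ^ ?E) (?t ^ ?E * ?t' ^ ?E)"
    using cong_mod2_mult[OF cong_mod2_sym[OF t] cong_mod2_refl] by simp
  moreover have "cheb_cong (int p ^ j) x (?t ^ ?E * ?t' ^ ?E) 1"
    using cong_mod2_power[OF cheb_roots_prod, of _ x ?E] by (simp only: power_mult_distrib power_one)
  ultimately have t': "cheb_cong (int p ^ j) x (?t' ^ ?E) 1"
    by (rule cong_mod2_trans)
  have "cheb_cong (int p ^ j) x (?t ^ a + ?t' ^ a) (?t ^ b + ?t' ^ b)"
    by (intro cong_mod2_add cong_mod2_power_cong_exponent[OF t assms(3)]
        cong_mod2_power_cong_exponent[OF t' assms(3)])
  then have "cheb_cong (int p ^ j) x (of_int (2 * cheb a x)) (of_int (2 * cheb b x))"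
    using cheb_cong_power_sum cong_mod2_sym cong_mod2_trans by meson
  then have "[2 * cheb a x = 2 * cheb b x] (mod int p ^ j)"
    by (simp only: cheb_cong_of_int_iff)
  moreover have "coprime 2 (int p ^ j)"
    using assms(2) by simp
  ultimately show ?thesis
    by (simp add: cong_mult_lcancel)
qed simp

lemma cheb_iterate_periodic:
  fixes p :: int
  assumes "prime p" and "odd p" and "coprime (int n) p" and "coprime (int n) (p ^ 2 - 1)"
  shows "\<exists>N>0. [(cheb n ^^ N) x = x] (mod p ^ j)"
proof -
  obtain q where p: "p = int q"
    using prime_ge_0_int[OF assms(1)] nonneg_int_cases by blast
  define E where "E = (q ^ 2 - 1) * q ^ j"
  have q: "prime q" "odd q" using assms(1,2) p by auto
  then have "q ^ 2 > 1"
    using one_less_power[OF prime_gt_1_nat[OF q(1)], of 2] by simp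
  then have "E > 0" using q by (simp add: E_def prime_gt_0_nat)
  have "int E = (p ^ 2 - 1) * p ^ j"
    using \<open>q ^ 2 > 1\<close> by (simp add: E_def p of_nat_diff)
  then have "coprime n E"
    using assms(3,4) by (simp flip: coprime_int_iff)
  then have "[n ^ totient E = 1] (mod E)"
    by (rule euler_theorem)
  then have "[cheb (n ^ totient E) x = cheb 1 x] (mod p ^ j)"
    using cheb_cong_index[OF q] unfolding E_def p by blast
  moreover have "totient E > 0"
    using \<open>E > 0\<close> by simp
  ultimately show ?thesis
    by (auto simp: funpow_cheb intro!: exI[of _ "totient E"])
qed

lemma least_period_pos_cong:
  assumes "\<exists>N>0. [(cheb n ^^ N) x = x] (mod m)"
  shows "least_period n m x > 0" and "[(cheb n ^^ least_period n m x) x = x] (mod m)"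
  using LeastI_ex[OF assms] unfolding least_period_def by auto

lemma least_period_le:
  "N > 0 \<Longrightarrow> [(cheb n ^^ N) x = x] (mod m) \<Longrightarrow> least_period n m x \<le> N"
  unfolding least_period_def by (rule Least_le) simp

lemma least_period_less_of_dvd:
  assumes periodic: "\<exists>N>0. [(cheb n ^^ N) x = x] (mod m')" and "m dvd m'"
    and not_period: "\<not> [(cheb n ^^ least_period n m x) x = x] (mod m')"
  shows "least_period n m x < least_period n m' x"
proof -
  let ?L = "least_period n m' x"
  have "[(cheb n ^^ ?L) x = x] (mod m)"
    using least_period_pos_cong(2)[OF periodic] cong_dvd_modulus[OF _ \<open>m dvd m'\<close>] by blast
  then have "least_period n m x \<le> ?L"
    using least_period_le least_period_pos_cong(1)[OF periodic] by blast
  moreover have "least_period n m x \<noteq> ?L"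
    using not_period least_period_pos_cong(2)[OF periodic] by auto
  ultimately show ?thesis by simp
qed

theorem lemma10:
  fixes p :: int and n w k :: nat and x :: int
  assumes "prime p" and "p > 3" and "n > 1"
    and "gcd (int n) p = 1" and "gcd (int n) (p^2 - 1) = 1"
    and "w > 0" and "k > 0"
    and "2 \<le> x" and "x \<le> p^k - 1"
    and "finite {t::nat. [(cheb n ^^ least_period n (p^w) x) x = x] (mod p^t)}"
    and "k > Max {t::nat. [(cheb n ^^ least_period n (p^w) x) x = x] (mod p^t)}"
  shows "least_period n (p^k) x > least_period n (p^w) x"
proof -
  define S where "S = {t::nat. [(cheb n ^^ least_period n (p^w) x) x = x] (mod p^t)}"
  have periodic: "\<exists>N>0. [(cheb n ^^ N) x = x] (mod p ^ j)" for j
    using cheb_iterate_periodic assms(1,2,4,5) prime_odd_int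
    by (simp add: coprime_iff_gcd_eq_1)
  have fin: "finite S" and max: "Max S < k"
    using assms(10,11) unfolding S_def by simp_all
  have "w \<in> S"
    unfolding S_def mem_Collect_eq by (rule least_period_pos_cong(2)[OF periodic])
  then have "w < k"
    using Max_ge[OF fin] max by fastforce
  moreover have "k \<notin> S"
    using Max_ge[OF fin, of k] max by auto
  ultimately show ?thesis
    unfolding S_def by (intro least_period_less_of_dvd periodic le_imp_power_dvd) auto
qed

end
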